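(* There is a positive absolute constant $k$ such that for every integer $c\ge 3$, $$G_c^{2/\varphi(c)}>k\,c.$$
   Context: For a positive integer $n$, $R(n)$ denotes the product of the distinct primes dividing $n$. $\varphi$ is Euler's totient function. For $c\ge3$, $G_c$ is the product of $R(abc)$ over all pairs of positive integers $(a,b)$ with $a+b=c$, $a<b$, $\gcd(a,b)=1$ (there are $\varphi(c)/2$ such pairs), so $G_c^{2/\varphi(c)}$ is the geometric mean of these radicals. *)

theory Defs
  imports "HOL-Number_Theory.Number_Theory"
begin

definition rad :: "nat \<Rightarrow> nat" where
  "rad n = (\<Prod>p\<in>prime_factors n. p)"

definition G :: "nat \<Rightarrow> nat" where
  "G c = (\<Prod>(a,b)\<in>{(a,b). 0 < a \<and> 0 < b \<and> a + b = c \<and> a < b \<and> coprime a b}. rad (a * b * c))"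

end

theory Submission
  imports Defs "HOL-Analysis.Summation_Tests" "HOL-Real_Asymp.Real_Asymp"
begin

(*
  For a coprime splitting c = a + b we have R(abc) = R(a) R(b) R(c), and ln R(x) = ln x - D(x)
  with the defect D(x) = \<Sum>\<^sub>p (v\<^sub>p(x) - 1) ln p. Since b \<ge> c/2, every pair contributes at
  least ln (c/2) + ln R(c) - D(a) - D(b) to ln G\<^sub>c. The numbers a, b occurring are distinct
  and below c, and the sum of D(x) over 0 < x < c is at most \<kappa> c with
  \<kappa> = \<Sum>\<^sub>n ln n / (n (n - 1)), because p\<^sup>k divides at most c/p\<^sup>k of them. As there are
  at least \<phi>(c)/2 pairs, 2 ln G\<^sub>c \<ge> \<phi>(c) (ln (c/2) + ln R(c)) - 2 \<kappa> c.
  The error term is absorbed by ln R(c): if c has \<omega> prime factors, then c \<le> (\<omega> + 1) \<phi>(c),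
  whereas ln R(c) \<ge> ln (\<omega> + 1)! \<ge> 2 \<kappa> (\<omega> + 1) - exp (2 \<kappa>).
  Hence 2 ln G\<^sub>c / \<phi>(c) \<ge> ln (c/2) - exp (2 \<kappa>).
*)

lemma sum_power_le_geometric:
  fixes x :: real
  assumes "0 \<le> x" "x < 1"
  shows "(\<Sum>k\<in>{m..<n}. x ^ k) \<le> x ^ m / (1 - x)"
proof (cases "m < n")
  case True
  then have "(1 - x) * (\<Sum>k\<in>{m..<n}. x ^ k) = x ^ m - x ^ n"
    using sum_gp_multiplied[of m "n - 1" x] by (simp add: atLeastLessThanSuc_atLeastAtMost[symmetric])
  also have "\<dots> \<le> x ^ m" using assms by simp
  finally show ?thesis using assms by (simp add: field_simps)
qed (use assms in simp)

lemma power_le_fact_mult_exp: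
  fixes x :: real
  assumes "0 \<le> x"
  shows "x ^ n \<le> fact n * exp x"
proof -
  have "(\<Sum>i\<in>{n}. x ^ i / fact i) \<le> (\<Sum>i. x ^ i / fact i)"
    using assms summable_exp_generic[of x]
    by (intro sum_le_suminf) (auto simp: divide_inverse ac_simps)
  then have "x ^ n / fact n \<le> exp x" by (simp add: exp_def divide_inverse ac_simps)
  then show ?thesis by (simp add: divide_le_eq mult.commute)
qed

lemma ln_fact_ge: "real n * t - exp t \<le> ln (fact n)"
proof -
  have "exp t ^ n \<le> fact n * exp (exp t)" by (rule power_le_fact_mult_exp) simp
  then have "ln (exp t ^ n) \<le> ln (fact n * exp (exp t))" by simp
  then show ?thesis by (simp add: ln_realpow ln_mult)
qed

lemma card_add_2_le_if_bounded:
  fixes A :: "nat set"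
  assumes "\<forall>a\<in>A. 2 \<le> a \<and> a < b" "2 \<le> b"
  shows "card A + 2 \<le> b"
proof -
  have "card A \<le> card {2..<b}" by (rule card_mono) (use assms in auto)
  then show ?thesis using assms(2) by simp
qed

lemma fact_card_le_prod:
  fixes S :: "nat set"
  assumes "finite S" "\<forall>p\<in>S. 2 \<le> p"
  shows "fact (card S + 1) \<le> \<Prod>S"
  using assms
proof (induction S rule: finite_linorder_max_induct)
  case (insert b A)
  then have "b \<notin> A" "card A + 2 \<le> b"
    using card_add_2_le_if_bounded[of A b] by auto
  then have "fact (card (insert b A) + 1) = (card A + 2) * fact (card A + 1)"
    using insert.hyps(1) by simp
  also have "\<dots> \<le> b * \<Prod>A"
    using insert \<open>card A + 2 \<le> b\<close> by (intro mult_mono) auto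
  finally show ?case using insert.hyps(1) \<open>b \<notin> A\<close> by simp
qed simp

lemma prod_one_minus_inverse_ge:
  fixes S :: "nat set"
  assumes "finite S" "\<forall>p\<in>S. 2 \<le> p"
  shows "1 / (real (card S) + 1) \<le> (\<Prod>p\<in>S. 1 - 1 / real p)"
  using assms
proof (induction S rule: finite_linorder_max_induct)
  case (insert b A)
  then have "b \<notin> A" "card A + 2 \<le> b"
    using card_add_2_le_if_bounded[of A b] by auto
  then have "1 / (real (card (insert b A)) + 1)
      = (1 - 1 / (real (card A) + 2)) * (1 / (real (card A) + 1))"
    using insert.hyps(1) by (simp add: field_simps)
  also have "\<dots> \<le> (1 - 1 / real b) * (\<Prod>p\<in>A. 1 - 1 / real p)"
    using insert \<open>card A + 2 \<le> b\<close> by (intro mult_mono) (auto simp: field_simps)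
  finally show ?case using insert.hyps(1) \<open>b \<notin> A\<close> by simp
qed simp

lemma card_multiples_le:
  assumes "0 < d"
  shows "real (card {x\<in>{1..<c}. d dvd x}) \<le> real c / real d"
proof -
  have "{x\<in>{1..<c}. d dvd x} \<subseteq> (\<lambda>j. d * j) ` {1..c div d}"
  proof
    fix x assume "x \<in> {x\<in>{1..<c}. d dvd x}"
    then obtain j where "x = d * j" "0 < j" "d * j \<le> c" by (auto elim!: dvdE)
    moreover have "j \<le> c div d"
      using \<open>d * j \<le> c\<close> assms by (metis div_le_mono nonzero_mult_div_cancel_left not_gr0)
    ultimately show "x \<in> (\<lambda>j. d * j) ` {1..c div d}" by auto
  qed
  then have "card {x\<in>{1..<c}. d dvd x} \<le> card ((\<lambda>j. d * j) ` {1..c div d})"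
    by (intro card_mono) auto
  also have "\<dots> \<le> c div d"
    using card_image_le[of "{1..c div d}" "\<lambda>j. d * j"] by simp
  finally have "real (card {x\<in>{1..<c}. d dvd x}) \<le> real (c div d)" by simp
  also have "\<dots> \<le> real c / real d" by (rule of_nat_div_le_of_nat)
  finally show ?thesis .
qed

lemma sum_card_filter_swap:
  assumes "finite A" "finite B"
  shows "(\<Sum>x\<in>A. card {y\<in>B. P x y}) = (\<Sum>y\<in>B. card {x\<in>A. P x y})"
proof -
  have "(\<Sum>x\<in>A. card {y\<in>B. P x y}) = (\<Sum>x\<in>A. \<Sum>y\<in>B. of_bool (P x y))"
    using assms by (simp add: Int_def)
  also have "\<dots> = (\<Sum>y\<in>B. \<Sum>x\<in>A. of_bool (P x y))" by (rule sum.swap)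
  also have "\<dots> = (\<Sum>y\<in>B. card {x\<in>A. P x y})"
    using assms by (simp add: Int_def)
  finally show ?thesis .
qed

lemma rad_pos: "0 < rad n"
  unfolding rad_def by (auto intro!: prod_pos simp: prime_gt_0_nat in_prime_factors_iff)

lemma rad_mult:
  assumes "coprime x y" "0 < x" "0 < y"
  shows "rad (x * y) = rad x * rad y"
proof -
  have "prime_factors x \<inter> prime_factors y = {}"
    using assms(1) by (auto simp: in_prime_factors_iff dest: coprime_common_divisor not_prime_unit)
  then show ?thesis
    unfolding rad_def using assms by (simp add: prime_factors_product prod.union_disjoint)
qed

lemma ln_rad_ge: "t * (real (card (prime_factors n)) + 1) - exp t \<le> ln (real (rad n))"
proof -
  have "fact (card (prime_factors n) + 1) \<le> rad n"
    unfolding rad_def by (rule fact_card_le_prod) (auto intro: prime_ge_2_nat simp: in_prime_factors_iff)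
  then have "fact (card (prime_factors n) + 1) \<le> real (rad n)"
    by (metis of_nat_fact of_nat_le_iff)
  then have "ln (fact (card (prime_factors n) + 1)) \<le> ln (real (rad n))"
    by (rule ln_mono) simp
  with ln_fact_ge[of "card (prime_factors n) + 1" t] show ?thesis
    by (simp add: algebra_simps)
qed

lemma le_card_prime_factors_mult_totient:
  "real n \<le> (real (card (prime_factors n)) + 1) * real (totient n)"
proof -
  have "1 / (real (card (prime_factors n)) + 1) \<le> (\<Prod>p\<in>prime_factors n. 1 - 1 / real p)"
    by (rule prod_one_minus_inverse_ge) (auto intro: prime_ge_2_nat simp: in_prime_factors_iff)
  then have "real n / (real (card (prime_factors n)) + 1) \<le> real (totient n)"
    unfolding totient_formula2 using mult_left_mono[of _ _ "real n"] by fastforce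
  then show ?thesis by (simp add: field_simps)
qed

definition rad_defect :: "nat \<Rightarrow> real" where
  "rad_defect x = ln (real x) - ln (real (rad x))"

lemma rad_defect_eq:
  assumes "0 < x"
  shows "rad_defect x = (\<Sum>p\<in>prime_factors x. (real (multiplicity p x) - 1) * ln (real p))"
proof -
  have pos: "\<And>p. p \<in> prime_factors x \<Longrightarrow> 0 < real p"
    by (auto simp: in_prime_factors_iff prime_gt_0_nat)
  have "real x = real (\<Prod>p\<in>prime_factors x. p ^ multiplicity p x)"
    using assms by (simp add: prod_prime_factors)
  also have "\<dots> = (\<Prod>p\<in>prime_factors x. real p ^ multiplicity p x)"
    by simp
  finally have "ln (real x) = (\<Sum>p\<in>prime_factors x. real (multiplicity p x) * ln (real p))"
    using pos by (simp add: ln_prod ln_realpow)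
  moreover have "ln (real (rad x)) = (\<Sum>p\<in>prime_factors x. ln (real p))"
    unfolding rad_def using pos by (simp add: ln_prod)
  ultimately show ?thesis
    unfolding rad_defect_def by (simp add: sum_subtractf algebra_simps)
qed

lemma rad_defect_nonneg: "0 \<le> rad_defect x"
proof (cases "x = 0")
  case False
  have "0 \<le> (real (multiplicity p x) - 1) * ln (real p)" if "p \<in> prime_factors x" for p
    using that prime_ge_1_nat[of p] by (simp add: prime_factors_multiplicity in_prime_factors_iff)
  then show ?thesis
    using False by (simp add: rad_defect_eq sum_nonneg)
qed (simp add: rad_defect_def rad_def)

lemma multiplicity_le_card_prime_powers:
  assumes "prime p" "0 < x" "x < c"
  shows "real (multiplicity p x) - 1 \<le> real (card {k\<in>{2..<c}. p ^ k dvd x})"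
proof -
  define m where "m = multiplicity p x"
  have "m < 2 ^ m" by simp
  also have "\<dots> \<le> p ^ m" using prime_ge_2_nat[OF assms(1)] by (simp add: power_mono)
  also have "\<dots> \<le> x" unfolding m_def using assms(2) by (simp add: dvd_imp_le multiplicity_dvd)
  finally have "{2..m} \<subseteq> {k\<in>{2..<c}. p ^ k dvd x}"
    using assms(3) by (auto simp: m_def intro: multiplicity_dvd')
  then have "card {2..m} \<le> card {k\<in>{2..<c}. p ^ k dvd x}" by (intro card_mono) auto
  then show ?thesis unfolding m_def[symmetric] by (cases m) auto
qed

lemma rad_defect_le:
  assumes "0 < x" "x < c"
  shows "rad_defect x
    \<le> (\<Sum>p | prime p \<and> p < c. real (card {k\<in>{2..<c}. p ^ k dvd x}) * ln (real p))"
proof -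
  have "rad_defect x
      \<le> (\<Sum>p\<in>prime_factors x. real (card {k\<in>{2..<c}. p ^ k dvd x}) * ln (real p))"
    unfolding rad_defect_eq[OF assms(1)]
    using assms multiplicity_le_card_prime_powers
    by (intro sum_mono mult_right_mono) (auto simp: in_prime_factors_iff dest: prime_ge_1_nat)
  also have "\<dots>
      \<le> (\<Sum>p | prime p \<and> p < c. real (card {k\<in>{2..<c}. p ^ k dvd x}) * ln (real p))"
  proof (rule sum_mono2)
    show "prime_factors x \<subseteq> {p. prime p \<and> p < c}"
      using assms by (auto simp: in_prime_factors_iff intro: le_less_trans dvd_imp_le)
  qed (auto dest: prime_ge_1_nat)
  finally show ?thesis .
qed

lemma sum_card_prime_powers_le:
  assumes "prime p"
  shows "(\<Sum>x\<in>{1..<c}. real (card {k\<in>{2..<c}. p ^ k dvd x}))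
    \<le> real c / (real p * (real p - 1))"
proof -
  have p: "2 \<le> real p" using prime_ge_2_nat[OF assms] by linarith
  have "(\<Sum>x\<in>{1..<c}. real (card {k\<in>{2..<c}. p ^ k dvd x}))
      = (\<Sum>k\<in>{2..<c}. real (card {x\<in>{1..<c}. p ^ k dvd x}))"
    unfolding of_nat_sum[symmetric]
    by (subst sum_card_filter_swap) auto
  also have "\<dots> \<le> (\<Sum>k\<in>{2..<c}. real c * (1 / real p) ^ k)"
    using card_multiples_le[of "p ^ _" c] assms
    by (intro sum_mono) (simp add: prime_gt_0_nat divide_inverse power_inverse)
  also have "\<dots> = real c * (\<Sum>k\<in>{2..<c}. (1 / real p) ^ k)"
    by (simp add: sum_distrib_left)
  also have "\<dots> \<le> real c * ((1 / real p) ^ 2 / (1 - 1 / real p))"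
    using p by (intro mult_left_mono sum_power_le_geometric) auto
  also have "\<dots> = real c / (real p * (real p - 1))"
    using p by (simp add: field_simps power2_eq_square)
  finally show ?thesis .
qed

definition defect_constant :: real where
  "defect_constant = (\<Sum>n. ln (real n) / (real n * (real n - 1)))"

lemma summable_defect_terms: "summable (\<lambda>n. ln (real n) / (real n * (real n - 1)))"
proof (rule summable_comparison_test_bigo)
  show "summable (\<lambda>n. norm (real n powr (-3/2)))"
    using summable_real_powr_iff[of "-3/2"] by simp
  show "(\<lambda>n. ln (real n) / (real n * (real n - 1))) \<in> O(\<lambda>n. real n powr (-3/2))"
    by real_asymp
qed

lemma defect_term_nonneg: "0 \<le> ln (real n) / (real n * (real n - 1))"
  by (cases n) auto

lemma defect_constant_nonneg: "0 \<le> defect_constant"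
  unfolding defect_constant_def
  by (rule suminf_nonneg[OF summable_defect_terms defect_term_nonneg])

lemma sum_rad_defect_le: "(\<Sum>x\<in>{1..<c}. rad_defect x) \<le> defect_constant * real c"
proof -
  let ?P = "{p. prime p \<and> p < c}"
  let ?f = "\<lambda>n. ln (real n) / (real n * (real n - 1))"
  have "(\<Sum>x\<in>{1..<c}. rad_defect x)
      \<le> (\<Sum>x\<in>{1..<c}. \<Sum>p\<in>?P. real (card {k\<in>{2..<c}. p ^ k dvd x}) * ln (real p))"
    by (intro sum_mono rad_defect_le) auto
  also have "\<dots>
      = (\<Sum>p\<in>?P. (\<Sum>x\<in>{1..<c}. real (card {k\<in>{2..<c}. p ^ k dvd x})) * ln (real p))"
    by (subst sum.swap) (simp add: sum_distrib_right)
  also have "\<dots> \<le> (\<Sum>p\<in>?P. real c / (real p * (real p - 1)) * ln (real p))"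
    by (intro sum_mono mult_right_mono sum_card_prime_powers_le) (auto dest: prime_ge_1_nat)
  also have "\<dots> = real c * (\<Sum>p\<in>?P. ?f p)"
    by (simp add: sum_distrib_left)
  also have "\<dots> \<le> real c * (\<Sum>n<c. ?f n)"
    by (intro mult_left_mono sum_mono2) (auto simp: defect_term_nonneg)
  also have "\<dots> \<le> real c * defect_constant"
    unfolding defect_constant_def
    by (intro mult_left_mono sum_le_suminf summable_defect_terms) (auto simp: defect_term_nonneg)
  finally show ?thesis by (simp add: mult.commute)
qed

definition coprime_splittings :: "nat \<Rightarrow> (nat \<times> nat) set" where
  "coprime_splittings c = {(a, b). 0 < a \<and> 0 < b \<and> a + b = c \<and> a < b \<and> coprime a b}"

lemma G_eq_prod_coprime_splittings: "G c = (\<Prod>(a, b)\<in>coprime_splittings c. rad (a * b * c))"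
  unfolding G_def coprime_splittings_def ..

lemma finite_coprime_splittings: "finite (coprime_splittings c)"
  by (rule finite_subset[of _ "{..c} \<times> {..c}"]) (auto simp: coprime_splittings_def)

lemma rad_mult_coprime_splitting:
  assumes "(a, b) \<in> coprime_splittings c"
  shows "rad (a * b * c) = rad a * rad b * rad c"
proof -
  have ab: "0 < a" "0 < b" "c = a + b" "coprime a b"
    using assms by (auto simp: coprime_splittings_def)
  have "coprime a c"
    using ab(4) unfolding ab(3) coprime_iff_gcd_eq_1 gcd_add2 .
  moreover have "coprime b c"
    using ab(4)
    unfolding ab(3) coprime_iff_gcd_eq_1 add.commute[of a b] gcd_add2 gcd.commute[of a b] .
  ultimately have "coprime (a * b) c"
    by simp
  then have "rad (a * b * c) = rad (a * b) * rad c"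
    by (rule rad_mult) (use ab in simp_all)
  also have "rad (a * b) = rad a * rad b"
    by (rule rad_mult) (use ab in simp_all)
  finally show ?thesis .
qed

lemma totient_le_twice_card_coprime_splittings:
  assumes "3 \<le> c"
  shows "totient c \<le> 2 * card (coprime_splittings c)"
proof -
  let ?S = "coprime_splittings c"
  have "totatives c \<subseteq> fst ` ?S \<union> snd ` ?S"
  proof
    fix x assume "x \<in> totatives c"
    then have x: "0 < x" "x \<le> c" "coprime x c" by (auto simp: in_totatives_iff)
    have "x \<noteq> c" using x(3) assms by auto
    with x have "x < c" by simp
    have cop: "coprime (c - x) x"
      using x(3) unfolding coprime_iff_gcd_eq_1 gcd.commute[of c x]
        gcd_diff1_nat[OF less_imp_le[OF \<open>x < c\<close>]] .
    then have cop': "coprime x (c - x)"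
      by (simp add: coprime_commute)
    have "2 * x \<noteq> c"
    proof
      assume "2 * x = c"
      then have "x dvd c" by auto
      with x(3) have "x = 1" by (simp add: coprime_absorb_left)
      with \<open>2 * x = c\<close> assms show False by simp
    qed
    then consider "2 * x < c" | "c < 2 * x" by linarith
    then show "x \<in> fst ` ?S \<union> snd ` ?S"
    proof cases
      case 1
      then have "(x, c - x) \<in> ?S"
        using x \<open>x < c\<close> cop' by (auto simp: coprime_splittings_def)
      then show ?thesis by force
    next
      case 2
      then have "(c - x, x) \<in> ?S"
        using x \<open>x < c\<close> cop by (auto simp: coprime_splittings_def)
      then show ?thesis by force
    qed
  qed
  then have "totient c \<le> card (fst ` ?S \<union> snd ` ?S)"
    unfolding totient_def by (intro card_mono) (auto simp: finite_coprime_splittings)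
  also have "\<dots> \<le> card (fst ` ?S) + card (snd ` ?S)" by (rule card_Un_le)
  also have "\<dots> \<le> 2 * card ?S"
    using card_image_le[OF finite_coprime_splittings, of fst c]
      card_image_le[OF finite_coprime_splittings, of snd c] by simp
  finally show ?thesis .
qed

lemma sum_rad_defect_coprime_splittings_le:
  "(\<Sum>(a, b)\<in>coprime_splittings c. rad_defect a + rad_defect b)
    \<le> (\<Sum>x\<in>{1..<c}. rad_defect x)"
proof -
  let ?S = "coprime_splittings c"
  have inj: "inj_on fst ?S" "inj_on snd ?S" and disj: "fst ` ?S \<inter> snd ` ?S = {}"
    by (auto simp: coprime_splittings_def inj_on_def)
  have "(\<Sum>(a, b)\<in>?S. rad_defect a + rad_defect b)
      = (\<Sum>x\<in>fst ` ?S. rad_defect x) + (\<Sum>x\<in>snd ` ?S. rad_defect x)"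
    by (simp add: case_prod_beta sum.distrib sum.reindex[OF inj(1)] sum.reindex[OF inj(2)])
  also have "\<dots> = (\<Sum>x\<in>fst ` ?S \<union> snd ` ?S. rad_defect x)"
    using disj by (simp add: sum.union_disjoint finite_coprime_splittings)
  also have "\<dots> \<le> (\<Sum>x\<in>{1..<c}. rad_defect x)"
    by (intro sum_mono2) (auto simp: coprime_splittings_def rad_defect_nonneg)
  finally show ?thesis .
qed

lemma ln_G_eq:
  "ln (real (G c))
    = (\<Sum>(a, b)\<in>coprime_splittings c. ln (real (rad a)) + ln (real (rad b)) + ln (real (rad c)))"
proof -
  have "real (G c) = (\<Prod>(a, b)\<in>coprime_splittings c. real (rad a) * real (rad b) * real (rad c))"
    unfolding G_eq_prod_coprime_splittings of_nat_prod
    by (intro prod.cong) (auto simp: rad_mult_coprime_splitting)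
  then show ?thesis
    by (simp add: ln_prod finite_coprime_splittings rad_pos ln_mult case_prod_beta)
qed

lemma ln_G_ge:
  assumes "3 \<le> c"
  shows "real (card (coprime_splittings c)) * (ln (real c / 2) + ln (real (rad c)))
      - defect_constant * real c \<le> ln (real (G c))"
proof -
  let ?S = "coprime_splittings c"
  let ?L = "ln (real c / 2) + ln (real (rad c))"
  have "?L - (rad_defect a + rad_defect b)
      \<le> ln (real (rad a)) + ln (real (rad b)) + ln (real (rad c))" if "(a, b) \<in> ?S" for a b
  proof -
    have "0 < a" "real c / 2 \<le> real b" using that by (auto simp: coprime_splittings_def)
    then have "0 \<le> ln (real a)" "ln (real c / 2) \<le> ln (real b)" using assms by auto
    then show ?thesis unfolding rad_defect_def by simp
  qed
  then have "(\<Sum>(a, b)\<in>?S. ?L - (rad_defect a + rad_defect b)) \<le> ln (real (G c))"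
    unfolding ln_G_eq by (intro sum_mono) auto
  moreover have "(\<Sum>(a, b)\<in>?S. ?L - (rad_defect a + rad_defect b))
      = real (card ?S) * ?L - (\<Sum>(a, b)\<in>?S. rad_defect a + rad_defect b)"
    by (simp add: case_prod_beta sum_subtractf)
  moreover have "(\<Sum>(a, b)\<in>?S. rad_defect a + rad_defect b) \<le> defect_constant * real c"
    using sum_rad_defect_coprime_splittings_le sum_rad_defect_le by (rule order.trans)
  ultimately show ?thesis by linarith
qed

lemma totient_mult_ln_le_ln_G:
  assumes "3 \<le> c"
  shows "real (totient c) * (ln (real c / 2) - exp (2 * defect_constant)) \<le> 2 * ln (real (G c))"
proof -
  let ?\<kappa> = "defect_constant"
  let ?w = "real (card (prime_factors c))"
  let ?L = "ln (real c / 2) + ln (real (rad c))"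
  have "0 \<le> ?L" using assms rad_pos[of c] by simp
  then have "real (totient c) * ?L \<le> 2 * real (card (coprime_splittings c)) * ?L"
    using totient_le_twice_card_coprime_splittings[OF assms] by (intro mult_right_mono) linarith+
  moreover have "2 * ?\<kappa> * real c \<le> 2 * ?\<kappa> * ((?w + 1) * real (totient c))"
    using le_card_prime_factors_mult_totient defect_constant_nonneg by (intro mult_left_mono) auto
  moreover have "real (totient c) * (ln (real c / 2) - exp (2 * ?\<kappa>))
      \<le> real (totient c) * (?L - 2 * ?\<kappa> * (?w + 1))"
    using ln_rad_ge[of "2 * ?\<kappa>" c] by (intro mult_left_mono) (auto simp: algebra_simps)
  ultimately show ?thesis
    using ln_G_ge[OF assms] by (simp add: algebra_simps)
qed

lemma G_pos: "0 < G c"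
  unfolding G_eq_prod_coprime_splittings by (auto intro!: prod_pos simp: rad_pos)

theorem theorem3:
  shows "\<exists>k::real. k > 0 \<and> (\<forall>c::nat. c \<ge> 3 \<longrightarrow>
           real (G c) powr (2 / real (totient c)) > k * real c)"
proof (intro exI conjI allI impI)
  define \<beta> where "\<beta> = exp (2 * defect_constant)"
  show "0 < exp (- \<beta>) / 4" by simp
  fix c :: nat
  assume "3 \<le> c"
  then have "0 < real (totient c)" by simp
  then have "ln (real c / 2) - \<beta> \<le> 2 / real (totient c) * ln (real (G c))"
    using totient_mult_ln_le_ln_G[OF \<open>3 \<le> c\<close>] unfolding \<beta>_def by (simp add: field_simps)
  then have "exp (ln (real c / 2) - \<beta>) \<le> real (G c) powr (2 / real (totient c))"
    using G_pos[of c] by (simp add: powr_def)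
  moreover have "exp (ln (real c / 2) - \<beta>) = real c / 2 * exp (- \<beta>)"
    using \<open>3 \<le> c\<close> by (simp add: exp_diff exp_minus field_simps)
  moreover have "exp (- \<beta>) / 4 * real c < real c / 2 * exp (- \<beta>)"
    using \<open>3 \<le> c\<close> by simp
  ultimately show "exp (- \<beta>) / 4 * real c < real (G c) powr (2 / real (totient c))"
    by linarith
qed

end
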